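(* For every $0<\varepsilon<1$ there exists an integer $\Theta=\Theta(\varepsilon)>0$ depending only on $\varepsilon$ (and not on $q$-independent data such as $m,n$) such that for all $m,n$, all $A\in\mathbb F_q^{m\times n}$ and all nonempty $U\subseteq[n]$ the following holds. Choose $\boldsymbol\theta\in\{1,\dots,\Theta\}$ uniformly at random and then $(\mathbf i_1,\dots,\mathbf i_{\boldsymbol\theta})\in U^{\boldsymbol\theta}$ uniformly at random, and let $\hat A=A[\mathbf i_1,\dots,\mathbf i_{\boldsymbol\theta}]$. Then $$\mathbb P\big[\mu_{\hat A,U}\text{ is }\varepsilon\text{-symmetric}\big]>1-\varepsilon.$$
   Context: $q\ge2$ is a fixed prime power. For a matrix $A\in\mathbb F_q^{m\times n}$ the Boltzmann distribution $\mu_A$ is the uniform distribution on $\ker(A)\subseteq\mathbb F_q^n$; for $U\subseteq[n]$, $\mu_{A,U}$ denotes its marginal on the coordinates in $U$, and $\mu_{A,i}$, $\mu_{A,i,j}$ denote one- and two-coordinate marginals. For $i_1,\dots,i_\ell\in[n]$, $A[i_1,\dots,i_\ell]$ is the matrix obtained from $A$ by appending $\ell$ rows, the $j$-th of which has entry $1$ in column $i_j$ and zeros elsewhere. A probability measure $\mu$ on $\Omega^U$ ($\Omega$, $U$ finite) is $\varepsilon$-symmetric if $\sum_{i,j\in U}d_{TV}(\mu_{i,j},\mu_i\otimes\mu_j)<\varepsilon|U|^2$, where $\mu_i,\mu_{i,j}$ are marginals and $d_{TV}$ is total variation distance. *)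

theory Defs
  imports "HOL-Probability.Probability"
begin

text \<open>Matrices A in F^{m x n} are represented as functions nat => nat => 'a,
  with rows 0..<m and columns 0..<n (column index i stands for i+1 in [n]).
  Vectors in F^n are functions nat => 'a vanishing outside {..<n}.\<close>

definition ker_mat :: "nat \<Rightarrow> nat \<Rightarrow> (nat \<Rightarrow> nat \<Rightarrow> 'a::field) \<Rightarrow> (nat \<Rightarrow> 'a) set" where
  "ker_mat m n A = {x. (\<forall>j. j \<ge> n \<longrightarrow> x j = 0) \<and> (\<forall>r<m. (\<Sum>j<n. A r j * x j) = 0)}"

definition boltzmann :: "nat \<Rightarrow> nat \<Rightarrow> (nat \<Rightarrow> nat \<Rightarrow> 'a::{field,finite}) \<Rightarrow> (nat \<Rightarrow> 'a) pmf" where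
  "boltzmann m n A = pmf_of_set (ker_mat m n A)"

definition boltzmann_marg :: "nat \<Rightarrow> nat \<Rightarrow> (nat \<Rightarrow> nat \<Rightarrow> 'a::{field,finite}) \<Rightarrow> nat set \<Rightarrow> (nat \<Rightarrow> 'a) pmf" where
  "boltzmann_marg m n A U = map_pmf (\<lambda>x. restrict x U) (boltzmann m n A)"

text \<open>A[i_1,...,i_l]: append l rows, the j-th having a 1 in column i_j.\<close>
definition append_rows :: "nat \<Rightarrow> (nat \<Rightarrow> nat \<Rightarrow> 'a::field) \<Rightarrow> nat list \<Rightarrow> nat \<Rightarrow> nat \<Rightarrow> 'a" where
  "append_rows m A is = (\<lambda>r j. if r < m then A r j
       else if r - m < length is then (if j = is ! (r - m) then 1 else 0) else 0)"

definition tv_dist :: "'b::finite pmf \<Rightarrow> 'b pmf \<Rightarrow> real" where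
  "tv_dist p q = (\<Sum>z\<in>UNIV. \<bar>pmf p z - pmf q z\<bar>) / 2"

definition eps_symmetric :: "real \<Rightarrow> nat set \<Rightarrow> (nat \<Rightarrow> 'b::finite) pmf \<Rightarrow> bool" where
  "eps_symmetric \<epsilon> U \<mu> \<longleftrightarrow>
     (\<Sum>i\<in>U. \<Sum>j\<in>U. tv_dist (map_pmf (\<lambda>x. (x i, x j)) \<mu>)
        (pair_pmf (map_pmf (\<lambda>x. x i) \<mu>) (map_pmf (\<lambda>x. x j) \<mu>))) < \<epsilon> * real (card U) ^ 2"

end

theory Submission
  imports Defs
begin

text \<open>Appending the rows e_{i_1},...,e_{i_l} to A pins the coordinates in S = {i_1,...,i_l} to 0,
  so the kernel becomes the subspace K_S of ker A vanishing on S. For the uniform distribution on a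
  subspace, the coordinates x_i and x_j are independent unless pinning i additionally forces x_j = 0:
  otherwise either x_j vanishes identically, or some y in K_S has y_i = 0 and y_j \<noteq> 0, and the
  shifts x \<mapsto> x + c y show that all values of x_j are equally likely given x_i. Hence the symmetry
  defect of K_S is at most the number of pairs (i, j) for which pinning i freezes j. Pinning a uniformly
  random i \<in> U raises the number of frozen coordinates of U by the average number of freezing pairs
  divided by |U|; as at most |U| coordinates can freeze, summing over \<theta> = 1..\<Theta> bounds the
  expected number of freezing pairs by |U|^2/\<Theta>, and Markov's inequality concludes.\<close>

definition pinned :: "('i \<Rightarrow> 'a::zero) set \<Rightarrow> 'i set \<Rightarrow> ('i \<Rightarrow> 'a) set" where
  "pinned K S = {x\<in>K. \<forall>i\<in>S. x i = 0}"

definition frozen :: "('i \<Rightarrow> 'a::zero) set \<Rightarrow> 'i set \<Rightarrow> 'i set" where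
  "frozen K S = {j. \<forall>x\<in>pinned K S. x j = 0}"

definition freezes :: "('i \<Rightarrow> 'a::zero) set \<Rightarrow> 'i set \<Rightarrow> 'i \<Rightarrow> 'i \<Rightarrow> bool" where
  "freezes K S i j \<longleftrightarrow> j \<notin> frozen K S \<and> j \<in> frozen K (insert i S)"

definition frozen_count :: "('i \<Rightarrow> 'a::zero) set \<Rightarrow> 'i set \<Rightarrow> 'i set \<Rightarrow> nat" where
  "frozen_count K U S = card (frozen K S \<inter> U)"

definition freezing_pairs :: "('i \<Rightarrow> 'a::zero) set \<Rightarrow> 'i set \<Rightarrow> 'i set \<Rightarrow> nat" where
  "freezing_pairs K U S = (\<Sum>i\<in>U. card {j\<in>U. freezes K S i j})"

lemma pinned_insert: "pinned K (insert i S) = {y\<in>pinned K S. y i = 0}"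
  by (auto simp: pinned_def)

lemma frozen_mono_insert: "frozen K S \<subseteq> frozen K (insert i S)"
  by (auto simp: frozen_def pinned_def)

lemma not_freezes_iff:
  "\<not> freezes K S i j \<longleftrightarrow> (\<forall>x\<in>pinned K S. x j = 0) \<or> (\<exists>y\<in>pinned K S. y i = 0 \<and> y j \<noteq> 0)"
  by (auto simp: freezes_def frozen_def pinned_insert)

lemma frozen_count_insert:
  assumes "finite U"
  shows "frozen_count K U (insert i S) = frozen_count K U S + card {j\<in>U. freezes K S i j}"
proof -
  have "frozen K (insert i S) \<inter> U = (frozen K S \<inter> U) \<union> {j\<in>U. freezes K S i j}"
    using frozen_mono_insert[of K S i] by (auto simp: freezes_def)
  moreover have "(frozen K S \<inter> U) \<inter> {j\<in>U. freezes K S i j} = {}"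
    by (auto simp: freezes_def)
  ultimately show ?thesis
    using assms by (simp add: frozen_count_def card_Un_disjoint)
qed

lemma sum_frozen_count_insert:
  assumes "finite U"
  shows "(\<Sum>i\<in>U. frozen_count K U (insert i S)) = card U * frozen_count K U S + freezing_pairs K U S"
  by (simp add: frozen_count_insert[OF assms] sum.distrib freezing_pairs_def)

lemma finite_vanishing_outside:
  "finite {x :: nat \<Rightarrow> 'a::{zero,finite}. \<forall>j. j \<ge> n \<longrightarrow> x j = 0}"
proof -
  have "{x :: nat \<Rightarrow> 'a. \<forall>j. j \<ge> n \<longrightarrow> x j = 0}
      \<subseteq> (\<lambda>f j. if j < n then f j else 0) ` PiE {..<n} (\<lambda>_. UNIV)"
  proof
    fix x :: "nat \<Rightarrow> 'a" assume "x \<in> {x. \<forall>j. j \<ge> n \<longrightarrow> x j = 0}"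
    then have "x = (\<lambda>j. if j < n then restrict x {..<n} j else 0)"
      by (auto simp: fun_eq_iff)
    then show "x \<in> (\<lambda>f j. if j < n then f j else 0) ` PiE {..<n} (\<lambda>_. UNIV)"
      by (intro image_eqI[of _ _ "restrict x {..<n}"]) auto
  qed
  then show ?thesis
    by (rule finite_subset) (intro finite_imageI finite_PiE; simp)
qed

lemma finite_ker_mat: "finite (ker_mat m n (A :: nat \<Rightarrow> nat \<Rightarrow> 'a::{field,finite}))"
  by (rule finite_subset[OF _ finite_vanishing_outside[of n]]) (auto simp: ker_mat_def)

lemma zero_in_ker_mat: "(\<lambda>_. 0) \<in> ker_mat m n A"
  by (simp add: ker_mat_def)

lemma ker_mat_add_scaled:
  "x \<in> ker_mat m n A \<Longrightarrow> y \<in> ker_mat m n A \<Longrightarrow> (\<lambda>k. x k + c * y k) \<in> ker_mat m n A"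
  unfolding ker_mat_def
  by (auto simp: distrib_left sum.distrib mult.left_commute sum_distrib_left[symmetric])

lemma finite_pinned_ker_mat: "finite (pinned (ker_mat m n (A :: nat \<Rightarrow> nat \<Rightarrow> 'a::{field,finite})) S)"
  unfolding pinned_def by (rule finite_subset[OF _ finite_ker_mat]) auto

lemma pinned_ker_mat_nonempty: "pinned (ker_mat m n A) S \<noteq> {}"
  using zero_in_ker_mat unfolding pinned_def by auto

lemma pinned_ker_mat_add_scaled:
  "x \<in> pinned (ker_mat m n A) S \<Longrightarrow> y \<in> pinned (ker_mat m n A) S
    \<Longrightarrow> (\<lambda>k. x k + c * y k) \<in> pinned (ker_mat m n A) S"
  unfolding pinned_def using ker_mat_add_scaled by auto

lemma append_rows_row_sum:
  assumes "k < length is" "is ! k < n"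
  shows "(\<Sum>j<n. append_rows m A is (m + k) j * x j) = x (is ! k)"
proof -
  have "(\<Sum>j<n. append_rows m A is (m + k) j * x j) = (\<Sum>j<n. if j = is ! k then x j else 0)"
    using assms by (intro sum.cong) (auto simp: append_rows_def)
  then show ?thesis using assms by simp
qed

lemma ker_mat_append_rows:
  assumes "set is \<subseteq> {..<n}"
  shows "ker_mat (m + length is) n (append_rows m A is) = pinned (ker_mat m n A) (set is)"
proof -
  have rows: "(\<forall>r<m + length is. (\<Sum>j<n. append_rows m A is r j * x j) = 0) \<longleftrightarrow>
      (\<forall>r<m. (\<Sum>j<n. A r j * x j) = 0) \<and> (\<forall>i\<in>set is. x i = 0)" for x
  proof -
    have "(\<forall>r<m + length is. P r) \<longleftrightarrow> (\<forall>r<m. P r) \<and> (\<forall>k<length is. P (m + k))" for P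
      by (auto, metis add_diff_inverse_nat add_less_cancel_left)
    moreover have "(\<forall>k<length is. (\<Sum>j<n. append_rows m A is (m + k) j * x j) = 0)
        \<longleftrightarrow> (\<forall>i\<in>set is. x i = 0)"
      using assms by (simp add: append_rows_row_sum all_set_conv_all_nth subset_iff)
    ultimately show ?thesis
      by (simp add: append_rows_def)
  qed
  show ?thesis
    by (auto simp: ker_mat_def pinned_def rows)
qed

lemma pmf_map_fst_finite:
  "pmf (map_pmf fst p) a = (\<Sum>b\<in>UNIV. pmf p (a, b :: 'b::finite))"
proof -
  have "fst -` {a} = {a} \<times> (UNIV :: 'b set)" by auto
  then show ?thesis
    by (simp add: pmf_map measure_measure_pmf_finite sum.cartesian_product')
qed

lemma pmf_map_snd_finite:
  "pmf (map_pmf snd p) b = (\<Sum>a\<in>UNIV. pmf p (a :: 'a::finite, b))"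
proof -
  have "snd -` {b} = (UNIV :: 'a set) \<times> {b}" by auto
  then show ?thesis
    by (simp add: pmf_map measure_measure_pmf_finite sum.cartesian_product')
qed

lemma pmf_eq_pair_marginals_if_constant_in_snd:
  fixes p :: "('a::finite \<times> 'b::finite) pmf"
  assumes const: "\<And>a b b'. pmf p (a, b) = pmf p (a, b')"
  shows "p = pair_pmf (map_pmf fst p) (map_pmf snd p)"
proof (rule pmf_eqI)
  fix z :: "'a \<times> 'b"
  obtain a b where z: "z = (a, b)" by (cases z)
  define q where "q = real CARD('b)"
  have q: "q > 0" by (simp add: q_def)
  have fst_a: "pmf (map_pmf fst p) a = q * pmf p (a, b)"
  proof -
    have "(\<Sum>b'\<in>UNIV. pmf p (a, b')) = (\<Sum>b'\<in>(UNIV :: 'b set). pmf p (a, b))"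
      using const by (intro sum.cong) auto
    then show ?thesis by (simp add: pmf_map_fst_finite q_def)
  qed
  have "1 = (\<Sum>z\<in>UNIV. pmf p z)"
    by (simp add: sum_pmf_eq_1)
  also have "\<dots> = (\<Sum>a'\<in>UNIV. \<Sum>b'\<in>UNIV. pmf p (a', b'))"
    by (simp add: sum.cartesian_product UNIV_Times_UNIV[symmetric] del: UNIV_Times_UNIV)
  also have "\<dots> = (\<Sum>b'\<in>UNIV. \<Sum>a'\<in>UNIV. pmf p (a', b'))"
    by (rule sum.swap)
  also have "\<dots> = (\<Sum>b'\<in>(UNIV :: 'b set). \<Sum>a'\<in>UNIV. pmf p (a', b))"
    using const by (intro sum.cong) auto
  also have "\<dots> = q * pmf (map_pmf snd p) b"
    by (simp add: pmf_map_snd_finite q_def)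
  finally have "pmf (map_pmf snd p) b = 1 / q"
    using q by (simp add: field_simps)
  then show "pmf p z = pmf (pair_pmf (map_pmf fst p) (map_pmf snd p)) z"
    using q by (simp add: z pmf_pair fst_a)
qed

lemma card_coordinate_fibre_shift_le:
  fixes V :: "('i \<Rightarrow> 'a::field) set"
  assumes "finite V"
    and closed: "\<And>x y c. x \<in> V \<Longrightarrow> y \<in> V \<Longrightarrow> (\<lambda>k. x k + c * y k) \<in> V"
    and y: "y \<in> V" "y i = 0" "y j \<noteq> 0"
  shows "card {x\<in>V. x i = a \<and> x j = b} \<le> card {x\<in>V. x i = a \<and> x j = b'}"
proof (rule card_inj_on_le)
  define c where "c = (b' - b) / y j"
  define shift where "shift x = (\<lambda>k. x k + c * y k)" for x
  show "inj_on shift {x\<in>V. x i = a \<and> x j = b}"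
    by (rule inj_onI) (auto simp: shift_def fun_eq_iff)
  show "shift ` {x\<in>V. x i = a \<and> x j = b} \<subseteq> {x\<in>V. x i = a \<and> x j = b'}"
  proof (intro image_subsetI CollectI conjI)
    fix x assume x: "x \<in> {x\<in>V. x i = a \<and> x j = b}"
    then show "shift x \<in> V"
      unfolding shift_def using closed y(1) by blast
    show "shift x i = a" "shift x j = b'"
      using x y(2,3) by (simp_all add: shift_def c_def)
  qed
  show "finite {x\<in>V. x i = a \<and> x j = b'}"
    using assms(1) by simp
qed

lemma uniform_coordinate_pair_indep:
  fixes V :: "('i \<Rightarrow> 'a::{field,finite}) set"
  assumes fin: "finite V" and ne: "V \<noteq> {}"
    and closed: "\<And>x y c. x \<in> V \<Longrightarrow> y \<in> V \<Longrightarrow> (\<lambda>k. x k + c * y k) \<in> V"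
    and indep: "(\<forall>x\<in>V. x j = 0) \<or> (\<exists>y\<in>V. y i = 0 \<and> y j \<noteq> 0)"
  shows "map_pmf (\<lambda>x. (x i, x j)) (pmf_of_set V) =
    pair_pmf (map_pmf (\<lambda>x. x i) (pmf_of_set V)) (map_pmf (\<lambda>x. x j) (pmf_of_set V))"
  (is "?p = pair_pmf ?pi ?pj")
proof (cases "\<forall>x\<in>V. x j = 0")
  case True
  moreover have "set_pmf (pmf_of_set V) = V"
    using fin ne by simp
  ultimately have "?p = map_pmf (\<lambda>x. (x i, 0)) (pmf_of_set V)" "?pj = map_pmf (\<lambda>_. 0) (pmf_of_set V)"
    by (auto intro!: map_pmf_cong simp del: map_pmf_const)
  then show ?thesis
    by (simp add: pair_return_pmf2 map_pmf_comp)
next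
  case False
  with indep obtain y where y: "y \<in> V" "y i = 0" "y j \<noteq> 0" by auto
  have "?p = pair_pmf (map_pmf fst ?p) (map_pmf snd ?p)"
  proof (rule pmf_eq_pair_marginals_if_constant_in_snd)
    fix a b b'
    have "pmf ?p (a, b) = card {x\<in>V. x i = a \<and> x j = b} / card V" for b
      using fin ne by (simp add: pmf_map measure_pmf_of_set vimage_def Int_def)
    moreover have "card {x\<in>V. x i = a \<and> x j = b} = card {x\<in>V. x i = a \<and> x j = b'}"
      using card_coordinate_fibre_shift_le[OF fin closed y] by (meson antisym)
    ultimately show "pmf ?p (a, b) = pmf ?p (a, b')" by simp
  qed
  then show ?thesis
    by (simp add: map_pmf_comp)
qed

lemma tv_dist_le_1: "tv_dist p q \<le> 1"
proof -
  have "(\<Sum>z\<in>UNIV. \<bar>pmf p z - pmf q z\<bar>) \<le> (\<Sum>z\<in>UNIV. pmf p z + pmf q z)"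
    by (intro sum_mono) (simp add: abs_le_iff add_increasing add_increasing2)
  also have "\<dots> = 2"
    by (simp add: sum.distrib sum_pmf_eq_1)
  finally show ?thesis
    by (simp add: tv_dist_def)
qed

lemma tv_dist_pinned_coordinate_pair_le:
  fixes A :: "nat \<Rightarrow> nat \<Rightarrow> 'a::{field,finite}" and m n :: nat and S :: "nat set"
  defines "P \<equiv> pmf_of_set (pinned (ker_mat m n A) S)"
  shows "tv_dist (map_pmf (\<lambda>x. (x i, x j)) P) (pair_pmf (map_pmf (\<lambda>x. x i) P) (map_pmf (\<lambda>x. x j) P))
    \<le> (if freezes (ker_mat m n A) S i j then 1 else 0)"
proof (cases "freezes (ker_mat m n A) S i j")
  case True
  then show ?thesis by (simp add: tv_dist_le_1)
next
  case False
  then have "map_pmf (\<lambda>x. (x i, x j)) P = pair_pmf (map_pmf (\<lambda>x. x i) P) (map_pmf (\<lambda>x. x j) P)"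
    unfolding P_def not_freezes_iff
    by (intro uniform_coordinate_pair_indep finite_pinned_ker_mat pinned_ker_mat_nonempty
        pinned_ker_mat_add_scaled)
  then show ?thesis
    using False by (simp add: tv_dist_def)
qed

lemma boltzmann_marg_append_rows:
  fixes A :: "nat \<Rightarrow> nat \<Rightarrow> 'a::{field,finite}"
  assumes "set is \<subseteq> {..<n}"
  shows "boltzmann_marg (m + length is) n (append_rows m A is) U =
    map_pmf (\<lambda>x. restrict x U) (pmf_of_set (pinned (ker_mat m n A) (set is)))"
  unfolding boltzmann_marg_def boltzmann_def using assms by (simp add: ker_mat_append_rows)

lemma eps_symmetric_if_few_freezing_pairs:
  fixes A :: "nat \<Rightarrow> nat \<Rightarrow> 'a::{field,finite}"
  assumes "set is \<subseteq> U" "U \<subseteq> {..<n}"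
    and few: "real (freezing_pairs (ker_mat m n A) U (set is)) < \<epsilon> * real (card U) ^ 2"
  shows "eps_symmetric \<epsilon> U (boltzmann_marg (m + length is) n (append_rows m A is) U)"
proof -
  define P where "P = pmf_of_set (pinned (ker_mat m n A) (set is))"
  have "finite U"
    using assms(2) finite_subset by blast
  have "(\<Sum>i\<in>U. \<Sum>j\<in>U. tv_dist (map_pmf (\<lambda>x. (x i, x j)) (map_pmf (\<lambda>x. restrict x U) P))
        (pair_pmf (map_pmf (\<lambda>x. x i) (map_pmf (\<lambda>x. restrict x U) P))
                  (map_pmf (\<lambda>x. x j) (map_pmf (\<lambda>x. restrict x U) P))))
      = (\<Sum>i\<in>U. \<Sum>j\<in>U. tv_dist (map_pmf (\<lambda>x. (x i, x j)) P)
        (pair_pmf (map_pmf (\<lambda>x. x i) P) (map_pmf (\<lambda>x. x j) P)))"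
    by (intro sum.cong refl) (simp add: map_pmf_comp)
  also have "\<dots> \<le> (\<Sum>i\<in>U. \<Sum>j\<in>U. if freezes (ker_mat m n A) (set is) i j then 1 else 0)"
    unfolding P_def by (intro sum_mono tv_dist_pinned_coordinate_pair_le)
  also have "\<dots> = freezing_pairs (ker_mat m n A) U (set is)"
    using \<open>finite U\<close> by (simp add: freezing_pairs_def sum.If_cases Int_def)
  finally show ?thesis
    using few assms(1,2) unfolding eps_symmetric_def P_def
    by (simp add: boltzmann_marg_append_rows subset_trans)
qed

definition lists_of_length :: "'i set \<Rightarrow> nat \<Rightarrow> 'i list set" where
  "lists_of_length U t = {xs. length xs = t \<and> set xs \<subseteq> U}"

lemma finite_lists_of_length: "finite U \<Longrightarrow> finite (lists_of_length U t)"
  using finite_lists_length_eq[of U t] by (simp add: lists_of_length_def conj_commute)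

lemma card_lists_of_length: "finite U \<Longrightarrow> card (lists_of_length U t) = card U ^ t"
  using card_lists_length_eq[of U t] by (simp add: lists_of_length_def conj_commute)

lemma lists_of_length_nonempty: "U \<noteq> {} \<Longrightarrow> lists_of_length U t \<noteq> {}"
  by (auto simp: lists_of_length_def intro!: exI[of _ "replicate t (SOME u. u \<in> U)"] some_in_eq[THEN iffD2])

lemma lists_of_length_Suc:
  "lists_of_length U (Suc t) = (\<lambda>(xs, i). i # xs) ` (lists_of_length U t \<times> U)"
  using lists_length_Suc_eq[of U t] by (simp add: lists_of_length_def conj_commute)

lemma sum_lists_of_length_Suc:
  "(\<Sum>xs\<in>lists_of_length U (Suc t). g xs) = (\<Sum>xs\<in>lists_of_length U t. \<Sum>i\<in>U. g (i # xs))"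
proof -
  have "(\<Sum>xs\<in>lists_of_length U (Suc t). g xs) = (\<Sum>(xs, i)\<in>lists_of_length U t \<times> U. g (i # xs))"
    unfolding lists_of_length_Suc by (subst sum.reindex) (auto simp: inj_on_def split_beta)
  then show ?thesis
    by (simp add: sum.cartesian_product)
qed

lemma sum_frozen_count_lists_of_length_Suc:
  assumes "finite U"
  shows "(\<Sum>xs\<in>lists_of_length U (Suc t). real (frozen_count K U (set xs))) =
    real (card U) * (\<Sum>xs\<in>lists_of_length U t. real (frozen_count K U (set xs)))
    + (\<Sum>xs\<in>lists_of_length U t. real (freezing_pairs K U (set xs)))"
proof -
  have "(\<Sum>i\<in>U. real (frozen_count K U (insert i S))) =
      real (card U) * real (frozen_count K U S) + real (freezing_pairs K U S)" for S
    using sum_frozen_count_insert[OF assms, of K S] by (metis of_nat_add of_nat_mult of_nat_sum)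
  then show ?thesis
    by (simp add: sum_lists_of_length_Suc sum.distrib sum_distrib_left)
qed

lemma sum_freezing_pairs_lists_of_length_le:
  assumes "finite U" "U \<noteq> {}"
  shows "(\<Sum>t\<in>{1..T}. (\<Sum>xs\<in>lists_of_length U t. real (freezing_pairs K U (set xs))) / real (card U) ^ t)
    \<le> real (card U) ^ 2"
proof -
  define u where "u = real (card U)"
  have u: "u > 0"
    using assms by (simp add: u_def card_gt_0_iff)
  define F where "F t = (\<Sum>xs\<in>lists_of_length U t. real (frozen_count K U (set xs))) / u ^ t" for t
  define B where "B t = (\<Sum>xs\<in>lists_of_length U t. real (freezing_pairs K U (set xs))) / u ^ t" for t
  have B_eq: "B t = u * (F (Suc t) - F t)" for t
    using u by (simp add: F_def B_def sum_frozen_count_lists_of_length_Suc[OF assms(1)] u_def field_simps)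
  have F_le: "F t \<le> u" for t
  proof -
    have "(\<Sum>xs\<in>lists_of_length U t. real (frozen_count K U (set xs))) \<le> (\<Sum>xs\<in>lists_of_length U t. u)"
      using assms(1) by (intro sum_mono) (simp add: frozen_count_def u_def card_mono)
    also have "\<dots> = u * u ^ t"
      using assms(1) by (simp add: card_lists_of_length u_def)
    finally show ?thesis
      using u by (simp add: F_def field_simps)
  qed
  have F_nonneg: "F t \<ge> 0" for t
    using u by (simp add: F_def sum_nonneg)
  have "(\<Sum>t\<in>{1..T}. B t) = u * (F (Suc T) - F 1)"
    by (simp add: B_eq sum_distrib_left[symmetric] sum_Suc_diff)
  also have "\<dots> \<le> u * u"
    using F_le[of "Suc T"] F_nonneg[of 1] u by (intro mult_left_mono) auto
  finally show ?thesis
    by (simp add: B_def u_def power2_eq_square)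
qed

definition random_pins :: "'i set \<Rightarrow> nat \<Rightarrow> 'i list pmf" where
  "random_pins U T = pmf_of_set {1..T} \<bind> (\<lambda>t. pmf_of_set (lists_of_length U t))"

lemma set_pmf_random_pins:
  assumes "finite U" "U \<noteq> {}" "T > 0"
  shows "set_pmf (random_pins U T) = (\<Union>t\<in>{1..T}. lists_of_length U t)"
  using assms by (simp add: random_pins_def finite_lists_of_length lists_of_length_nonempty)

lemma expectation_random_pins:
  fixes g :: "'i list \<Rightarrow> real"
  assumes "finite U" "U \<noteq> {}" "T > 0"
  shows "measure_pmf.expectation (random_pins U T) g =
    (\<Sum>t\<in>{1..T}. (\<Sum>xs\<in>lists_of_length U t. g xs) / real (card U) ^ t) / real T"
  using assms unfolding random_pins_def
  by (simp add: pmf_expectation_bind_pmf_of_set finite_lists_of_length lists_of_length_nonempty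
      integral_pmf_of_set card_lists_of_length sum_divide_distrib divide_inverse_commute sum_distrib_left)

lemma prob_random_pins_many_freezing_pairs_le:
  assumes "finite U" "U \<noteq> {}" "T > 0" "c > 0"
  shows "measure_pmf.prob (random_pins U T) {xs. c \<le> real (freezing_pairs K U (set xs))}
    \<le> real (card U) ^ 2 / (real T * c)"
proof -
  have "finite (set_pmf (random_pins U T))"
    using assms by (simp add: set_pmf_random_pins finite_lists_of_length)
  then have "measure_pmf.prob (random_pins U T)
        {xs \<in> space (random_pins U T). c \<le> real (freezing_pairs K U (set xs))}
      \<le> measure_pmf.expectation (random_pins U T) (\<lambda>xs. real (freezing_pairs K U (set xs))) / c"
    using assms(4) by (intro integral_Markov_inequality_measure[where A = UNIV])
      (auto intro: integrable_measure_pmf_finite)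
  also have "\<dots> \<le> real (card U) ^ 2 / real T / c"
    using assms sum_freezing_pairs_lists_of_length_le[OF assms(1,2), where T = T and K = K]
    by (simp add: expectation_random_pins divide_right_mono)
  finally show ?thesis
    by (simp add: field_simps)
qed

lemma prob_random_pins_eps_symmetric_ge:
  fixes A :: "nat \<Rightarrow> nat \<Rightarrow> 'a::{field,finite}"
  assumes U: "U \<subseteq> {..<n}" "U \<noteq> {}" and "T > 0" "\<epsilon> > 0"
  shows "measure_pmf.prob (random_pins U T)
      {is. eps_symmetric \<epsilon> U (boltzmann_marg (m + length is) n (append_rows m A is) U)}
    \<ge> 1 - 1 / (\<epsilon> * real T)"
proof -
  define D where "D = random_pins U T"
  define many where "many = {xs. \<epsilon> * real (card U) ^ 2 \<le> real (freezing_pairs (ker_mat m n A) U (set xs))}"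
  have "finite U"
    using U(1) finite_subset by blast
  then have u: "real (card U) > 0"
    using U(2) by (simp add: card_gt_0_iff)
  have "(UNIV - many) \<inter> set_pmf D \<subseteq>
      {is. eps_symmetric \<epsilon> U (boltzmann_marg (m + length is) n (append_rows m A is) U)}"
    using \<open>finite U\<close> assms
    by (auto simp: D_def many_def set_pmf_random_pins lists_of_length_def not_le
        intro!: eps_symmetric_if_few_freezing_pairs)
  then have "measure_pmf.prob D ((UNIV - many) \<inter> set_pmf D) \<le>
      measure_pmf.prob D {is. eps_symmetric \<epsilon> U (boltzmann_marg (m + length is) n (append_rows m A is) U)}"
    by (intro measure_pmf.finite_measure_mono) auto
  moreover have "measure_pmf.prob D ((UNIV - many) \<inter> set_pmf D) = 1 - measure_pmf.prob D many"
    by (simp add: measure_Int_set_pmf measure_pmf.prob_compl[where A = many, simplified])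
  moreover have "measure_pmf.prob D many \<le> real (card U) ^ 2 / (real T * (\<epsilon> * real (card U) ^ 2))"
    unfolding D_def many_def using \<open>finite U\<close> assms u
    by (intro prob_random_pins_many_freezing_pairs_le) auto
  ultimately show ?thesis
    using u by (simp add: D_def field_simps)
qed

theorem lemma2p3:
  fixes \<epsilon> :: real
  assumes "0 < \<epsilon>" and "\<epsilon> < 1"
  shows "\<exists>\<Theta>::nat. \<Theta> > 0 \<and>
    (\<forall>(m::nat) (n::nat) (A :: nat \<Rightarrow> nat \<Rightarrow> 'a::{field,finite}) (U::nat set).
       U \<subseteq> {..<n} \<longrightarrow> U \<noteq> {} \<longrightarrow>
       measure_pmf.prob
         (bind_pmf (pmf_of_set {1..\<Theta>})
            (\<lambda>\<theta>. pmf_of_set {is. length is = \<theta> \<and> set is \<subseteq> U}))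
         {is. eps_symmetric \<epsilon> U (boltzmann_marg (m + length is) n (append_rows m A is) U)}
       > 1 - \<epsilon>)"
proof -
  obtain T :: nat where T: "1 / \<epsilon>\<^sup>2 < real T"
    using reals_Archimedean2 by blast
  have "T > 0"
    using T assms(1) by (auto intro: ccontr)
  have small: "1 / (\<epsilon> * real T) < \<epsilon>"
    using T assms(1) \<open>T > 0\<close> by (simp add: field_simps power2_eq_square)
  show ?thesis
  proof (intro exI[of _ T] conjI allI impI \<open>T > 0\<close>)
    fix m n :: nat and A :: "nat \<Rightarrow> nat \<Rightarrow> 'a" and U :: "nat set"
    assume "U \<subseteq> {..<n}" "U \<noteq> {}"
    from prob_random_pins_eps_symmetric_ge[OF this \<open>T > 0\<close> assms(1), where m = m and A = A]
    show "measure_pmf.prob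
         (bind_pmf (pmf_of_set {1..T}) (\<lambda>\<theta>. pmf_of_set {is. length is = \<theta> \<and> set is \<subseteq> U}))
         {is. eps_symmetric \<epsilon> U (boltzmann_marg (m + length is) n (append_rows m A is) U)}
       > 1 - \<epsilon>"
      using small unfolding random_pins_def lists_of_length_def by linarith
  qed
qed

end
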